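(* Let $\mathcal{C}$ be a symmetric monoidal category with discarding and zero morphisms which satisfies normalisation. Then (i) if $\psi$ is a non-zero pure state, its normalisation is pure; and (ii) if $\psi$ and $\phi$ are pure states, then $\psi\otimes\phi$ is pure.
   Context: $\mathcal{C}$ is symmetric monoidal with unit $I$; unitors are suppressed. States are morphisms $I\to A$, scalars are morphisms $I\to I$. Discarding: effects $\top_A\colon A\to I$ with $\top_{A\otimes B}=\top_A\otimes\top_B$ and $\top_I=1_I$. A morphism $f\colon A\to B$ is causal if $\top_B\circ f=\top_A$; a state $\rho$ is causal if $\top\circ\rho=1_I$. Zero morphisms: for all objects $A,B$ a morphism $0\colon A\to B$ such that composing (via $\circ$) or tensoring (via $\otimes$) $0$ with any morphism yields $0$. Normalisation: every non-zero state $\rho$ can be written as $\rho=\sigma\otimes r$ for a scalar $r$ and a unique causal state $\sigma$, called the normalisation of $\rho$. A state $\sigma$ of $B\otimes C$ is a dilation of a morphism/state $f$ of $B$ if $(1_B\otimes\top_C)\circ\sigma=f$. A morphism $f\colon A\to B$ is pure if either $f=0$ or: whenever $g\colon A\to B\otimes C$ satisfies $(1_B\otimes\top_C)\circ g=f$, then $g=f\otimes\rho$ for some causal state $\rho$ of $C$. *)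

theory Defs
  imports Main
begin

text \<open>A (strict) symmetric monoidal category presented by its data.
  Objects are all elements of type 'o; arrows are the elements of type 'm
  satisfying arr.  Composition comp g f means g after f.\<close>

record ('o, 'm) smc =
  arr   :: "'m \<Rightarrow> bool"
  dom   :: "'m \<Rightarrow> 'o"
  cod   :: "'m \<Rightarrow> 'o"
  comp  :: "'m \<Rightarrow> 'm \<Rightarrow> 'm"
  ident :: "'o \<Rightarrow> 'm"
  tobj  :: "'o \<Rightarrow> 'o \<Rightarrow> 'o"
  tarr  :: "'m \<Rightarrow> 'm \<Rightarrow> 'm"
  unit  :: "'o"
  sym   :: "'o \<Rightarrow> 'o \<Rightarrow> 'm"
  disc  :: "'o \<Rightarrow> 'm"
  zero  :: "'o \<Rightarrow> 'o \<Rightarrow> 'm"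

definition hom :: "('o, 'm) smc \<Rightarrow> 'm \<Rightarrow> 'o \<Rightarrow> 'o \<Rightarrow> bool" where
  "hom C f a b \<longleftrightarrow> arr C f \<and> dom C f = a \<and> cod C f = b"

definition is_category :: "('o, 'm) smc \<Rightarrow> bool" where
  "is_category C \<longleftrightarrow>
     (\<forall>a. hom C (ident C a) a a) \<and>
     (\<forall>f g a b c. hom C f a b \<longrightarrow> hom C g b c \<longrightarrow> hom C (comp C g f) a c) \<and>
     (\<forall>f a b. hom C f a b \<longrightarrow> comp C (ident C b) f = f \<and> comp C f (ident C a) = f) \<and>
     (\<forall>f g h a b c d. hom C f a b \<longrightarrow> hom C g b c \<longrightarrow> hom C h c d \<longrightarrow>
        comp C h (comp C g f) = comp C (comp C h g) f)"

definition is_strict_monoidal :: "('o, 'm) smc \<Rightarrow> bool" where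
  "is_strict_monoidal C \<longleftrightarrow>
     is_category C \<and>
     (\<forall>f g a b c d. hom C f a b \<longrightarrow> hom C g c d \<longrightarrow>
        hom C (tarr C f g) (tobj C a c) (tobj C b d)) \<and>
     (\<forall>a b. tarr C (ident C a) (ident C b) = ident C (tobj C a b)) \<and>
     (\<forall>f f' g g' a b c a' b' c'. hom C f a b \<longrightarrow> hom C g b c \<longrightarrow>
        hom C f' a' b' \<longrightarrow> hom C g' b' c' \<longrightarrow>
        tarr C (comp C g f) (comp C g' f') = comp C (tarr C g g') (tarr C f f')) \<and>
     (\<forall>a b c. tobj C (tobj C a b) c = tobj C a (tobj C b c)) \<and>
     (\<forall>a. tobj C (unit C) a = a \<and> tobj C a (unit C) = a) \<and>
     (\<forall>f g h. arr C f \<longrightarrow> arr C g \<longrightarrow> arr C h \<longrightarrow>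
        tarr C (tarr C f g) h = tarr C f (tarr C g h)) \<and>
     (\<forall>f. arr C f \<longrightarrow> tarr C (ident C (unit C)) f = f \<and> tarr C f (ident C (unit C)) = f)"

definition is_symmetric_monoidal :: "('o, 'm) smc \<Rightarrow> bool" where
  "is_symmetric_monoidal C \<longleftrightarrow>
     is_strict_monoidal C \<and>
     (\<forall>a b. hom C (sym C a b) (tobj C a b) (tobj C b a)) \<and>
     (\<forall>f g a b c d. hom C f a b \<longrightarrow> hom C g c d \<longrightarrow>
        comp C (sym C b d) (tarr C f g) = comp C (tarr C g f) (sym C a c)) \<and>
     (\<forall>a b. comp C (sym C b a) (sym C a b) = ident C (tobj C a b)) \<and>
     (\<forall>a b c. sym C a (tobj C b c) =
        comp C (tarr C (ident C b) (sym C a c)) (tarr C (sym C a b) (ident C c)))"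

definition has_discarding :: "('o, 'm) smc \<Rightarrow> bool" where
  "has_discarding C \<longleftrightarrow>
     (\<forall>a. hom C (disc C a) a (unit C)) \<and>
     (\<forall>a b. disc C (tobj C a b) = tarr C (disc C a) (disc C b)) \<and>
     disc C (unit C) = ident C (unit C)"

definition has_zeros :: "('o, 'm) smc \<Rightarrow> bool" where
  "has_zeros C \<longleftrightarrow>
     (\<forall>a b. hom C (zero C a b) a b) \<and>
     (\<forall>f a b c. hom C f b c \<longrightarrow> comp C f (zero C a b) = zero C a c) \<and>
     (\<forall>f a b c. hom C f a b \<longrightarrow> comp C (zero C b c) f = zero C a c) \<and>
     (\<forall>f a b c d. hom C f c d \<longrightarrow>
        tarr C (zero C a b) f = zero C (tobj C a c) (tobj C b d) \<and>
        tarr C f (zero C a b) = zero C (tobj C c a) (tobj C d b))"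

definition state :: "('o, 'm) smc \<Rightarrow> 'm \<Rightarrow> 'o \<Rightarrow> bool" where
  "state C \<rho> a \<longleftrightarrow> hom C \<rho> (unit C) a"

definition scalar :: "('o, 'm) smc \<Rightarrow> 'm \<Rightarrow> bool" where
  "scalar C r \<longleftrightarrow> hom C r (unit C) (unit C)"

definition causal :: "('o, 'm) smc \<Rightarrow> 'm \<Rightarrow> bool" where
  "causal C f \<longleftrightarrow> arr C f \<and> comp C (disc C (cod C f)) f = disc C (dom C f)"

definition causal_state :: "('o, 'm) smc \<Rightarrow> 'm \<Rightarrow> 'o \<Rightarrow> bool" where
  "causal_state C \<rho> a \<longleftrightarrow> state C \<rho> a \<and> comp C (disc C a) \<rho> = ident C (unit C)"

definition is_normalisation :: "('o, 'm) smc \<Rightarrow> 'm \<Rightarrow> 'm \<Rightarrow> bool" where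
  "is_normalisation C \<rho> \<sigma> \<longleftrightarrow>
     causal_state C \<sigma> (cod C \<rho>) \<and> (\<exists>r. scalar C r \<and> \<rho> = tarr C \<sigma> r)"

definition satisfies_normalisation :: "('o, 'm) smc \<Rightarrow> bool" where
  "satisfies_normalisation C \<longleftrightarrow>
     (\<forall>\<rho> a. state C \<rho> a \<longrightarrow> \<rho> \<noteq> zero C (unit C) a \<longrightarrow>
        (\<exists>!\<sigma>. is_normalisation C \<rho> \<sigma>))"

definition pure :: "('o, 'm) smc \<Rightarrow> 'm \<Rightarrow> bool" where
  "pure C f \<longleftrightarrow> arr C f \<and>
     (f = zero C (dom C f) (cod C f) \<or>
      (\<forall>g c. hom C g (dom C f) (tobj C (cod C f) c) \<longrightarrow>
         comp C (tarr C (ident C (cod C f)) (disc C c)) g = f \<longrightarrow>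
         (\<exists>\<rho>. causal_state C \<rho> c \<and> g = tarr C f \<rho>)))"

end

theory Submission
  imports Defs
begin

(* Everything rests on uniqueness of normalisation, together with two facts: discarding part of
   a causal state leaves a causal state, and scalars move freely through tensors.
   (i) If psi = sigma (x) r is pure and g dilates sigma, then g (x) r dilates psi, so
   g (x) r = psi (x) rho = (sigma (x) rho) (x) r. Both g and sigma (x) rho are causal, so both
   are the normalisation of g (x) r, whence g = sigma (x) rho.
   (ii) Normalising the factors leaves causal states, pure by (i), and a scalar. A dilation of a
   tensor psi (x) phi of causal pure states also dilates psi, so it is psi (x) rho'; cancelling
   the causal psi shows that rho' dilates phi, so rho' = phi (x) rho. Rescaling a causal pure
   state sigma keeps it pure, because the normalisation of a dilation of sigma (x) r is a
   dilation of sigma. *)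

lemma is_normalisation_iff:
  "state C \<psi> a \<Longrightarrow>
   is_normalisation C \<psi> \<sigma> \<longleftrightarrow> causal_state C \<sigma> a \<and> (\<exists>r. scalar C r \<and> \<psi> = tarr C \<sigma> r)"
  unfolding is_normalisation_def state_def hom_def by auto

lemma causal_state_state: "causal_state C \<sigma> a \<Longrightarrow> state C \<sigma> a"
  unfolding causal_state_def by simp

locale normalising_smc =
  fixes C :: "('o, 'm) smc"
  assumes symmetric_monoidal: "is_symmetric_monoidal C"
    and discarding: "has_discarding C"
    and zeros: "has_zeros C"
    and normalisation: "satisfies_normalisation C"
begin

lemma category: "is_category C"
  and strict_monoidal: "is_strict_monoidal C"
  using symmetric_monoidal unfolding is_symmetric_monoidal_def is_strict_monoidal_def by simp_all

lemma hom_ident [intro, simp]: "hom C (ident C a) a a"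
  using category unfolding is_category_def by metis

lemma hom_comp [intro]: "hom C f a b \<Longrightarrow> hom C g b c \<Longrightarrow> hom C (comp C g f) a c"
  using category unfolding is_category_def by metis

lemma comp_ident_left [simp]: "hom C f a b \<Longrightarrow> comp C (ident C b) f = f"
  and comp_ident_right [simp]: "hom C f a b \<Longrightarrow> comp C f (ident C a) = f"
  using category unfolding is_category_def by metis+

lemma comp_assoc:
  "hom C f a b \<Longrightarrow> hom C g b c \<Longrightarrow> hom C h c d \<Longrightarrow> comp C h (comp C g f) = comp C (comp C h g) f"
  using category unfolding is_category_def by metis

lemma hom_tarr [intro]:
  "hom C f a b \<Longrightarrow> hom C g c d \<Longrightarrow> hom C (tarr C f g) (tobj C a c) (tobj C b d)"
  using strict_monoidal unfolding is_strict_monoidal_def by metis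

lemma tarr_ident: "tarr C (ident C a) (ident C b) = ident C (tobj C a b)"
  using strict_monoidal unfolding is_strict_monoidal_def by metis

lemma tarr_comp:
  "hom C f a b \<Longrightarrow> hom C g b c \<Longrightarrow> hom C f' a' b' \<Longrightarrow> hom C g' b' c' \<Longrightarrow>
   tarr C (comp C g f) (comp C g' f') = comp C (tarr C g g') (tarr C f f')"
  using strict_monoidal unfolding is_strict_monoidal_def by metis

lemma tobj_assoc [simp]: "tobj C (tobj C a b) c = tobj C a (tobj C b c)"
  using strict_monoidal unfolding is_strict_monoidal_def by metis

lemma tobj_unit_left [simp]: "tobj C (unit C) a = a"
  and tobj_unit_right [simp]: "tobj C a (unit C) = a"
  using strict_monoidal unfolding is_strict_monoidal_def by metis+

lemma tarr_assoc:
  "arr C f \<Longrightarrow> arr C g \<Longrightarrow> arr C h \<Longrightarrow> tarr C (tarr C f g) h = tarr C f (tarr C g h)"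
  using strict_monoidal unfolding is_strict_monoidal_def by metis

lemma tarr_unit_left [simp]: "arr C f \<Longrightarrow> tarr C (ident C (unit C)) f = f"
  and tarr_unit_right [simp]: "arr C f \<Longrightarrow> tarr C f (ident C (unit C)) = f"
  using strict_monoidal unfolding is_strict_monoidal_def by metis+

lemma hom_sym [intro]: "hom C (sym C a b) (tobj C a b) (tobj C b a)"
  using symmetric_monoidal unfolding is_symmetric_monoidal_def by metis

lemma sym_natural:
  "hom C f a b \<Longrightarrow> hom C g c d \<Longrightarrow>
   comp C (sym C b d) (tarr C f g) = comp C (tarr C g f) (sym C a c)"
  using symmetric_monoidal unfolding is_symmetric_monoidal_def by metis

lemma sym_inverse: "comp C (sym C b a) (sym C a b) = ident C (tobj C a b)"
  using symmetric_monoidal unfolding is_symmetric_monoidal_def by metis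

lemma sym_hexagon:
  "sym C a (tobj C b c) = comp C (tarr C (ident C b) (sym C a c)) (tarr C (sym C a b) (ident C c))"
  using symmetric_monoidal unfolding is_symmetric_monoidal_def by metis

lemma hom_disc [intro, simp]: "hom C (disc C a) a (unit C)"
  using discarding unfolding has_discarding_def by metis

lemma disc_tobj: "disc C (tobj C a b) = tarr C (disc C a) (disc C b)"
  using discarding unfolding has_discarding_def by metis

lemma hom_zero [intro, simp]: "hom C (zero C a b) a b"
  using zeros unfolding has_zeros_def by metis

lemma comp_zero_right: "hom C f b c \<Longrightarrow> comp C f (zero C a b) = zero C a c"
  using zeros unfolding has_zeros_def by metis

lemma tarr_zero_left: "hom C f c d \<Longrightarrow> tarr C (zero C a b) f = zero C (tobj C a c) (tobj C b d)"
  and tarr_zero_right: "hom C f c d \<Longrightarrow> tarr C f (zero C a b) = zero C (tobj C c a) (tobj C d b)"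
  using zeros unfolding has_zeros_def by metis+

lemma hom_arr: "hom C f a b \<Longrightarrow> arr C f"
  by (simp add: hom_def)

lemma arr_tarr [intro, simp]: "arr C f \<Longrightarrow> arr C g \<Longrightarrow> arr C (tarr C f g)"
  using hom_tarr hom_arr unfolding hom_def by blast

abbreviation discard_right :: "'o \<Rightarrow> 'o \<Rightarrow> 'm" where
  "discard_right a c \<equiv> tarr C (ident C a) (disc C c)"

lemma hom_discard_right [intro, simp]: "hom C (discard_right a c) (tobj C a c) a"
  using hom_tarr[OF hom_ident hom_disc, of a c] by simp

lemma sym_unit_right: "sym C a (unit C) = ident C a"
proof -
  have hom_sym_a: "hom C (sym C a (unit C)) a a" and hom_sym_a': "hom C (sym C (unit C) a) a a"
    using hom_sym[of a "unit C"] hom_sym[of "unit C" a] by simp_all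
  have idem: "sym C a (unit C) = comp C (sym C a (unit C)) (sym C a (unit C))"
    using sym_hexagon[of a "unit C" "unit C"] hom_sym_a hom_arr by simp
  have inv: "comp C (sym C (unit C) a) (sym C a (unit C)) = ident C a"
    using sym_inverse[of "unit C" a] by simp
  have "ident C a = comp C (sym C (unit C) a) (comp C (sym C a (unit C)) (sym C a (unit C)))"
    using inv idem by simp
  also have "\<dots> = sym C a (unit C)"
    using comp_assoc[OF hom_sym_a hom_sym_a hom_sym_a'] inv hom_sym_a by simp
  finally show ?thesis by simp
qed

lemma sym_unit_left: "sym C (unit C) a = ident C a"
  using sym_inverse[of a "unit C"] hom_sym[of "unit C" a] by (simp add: sym_unit_right)

lemma scalar_tarr_commute:
  assumes "scalar C r" and "hom C f a b"
  shows "tarr C r f = tarr C f r"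
proof -
  have "hom C (tarr C r f) a b" and "hom C (tarr C f r) a b"
    using assms hom_tarr unfolding scalar_def by fastforce+
  then show ?thesis
    using sym_natural[of r "unit C" "unit C" f a b] assms
    by (simp add: scalar_def sym_unit_left)
qed

lemma comp_ident_tarr:
  "hom C \<psi> u a \<Longrightarrow> hom C g u' b \<Longrightarrow> hom C h b c \<Longrightarrow>
   comp C (tarr C (ident C a) h) (tarr C \<psi> g) = tarr C \<psi> (comp C h g)"
  using tarr_comp[of \<psi> u a "ident C a" a g u' b h c] by simp

lemma comp_tarr_ident:
  "hom C g u b \<Longrightarrow> hom C \<phi> u' a \<Longrightarrow> hom C h b c \<Longrightarrow>
   comp C (tarr C h (ident C a)) (tarr C g \<phi>) = tarr C (comp C h g) \<phi>"
  using tarr_comp[of g u b h c \<phi> u' a "ident C a" a] by simp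

lemma comp_tarr_scalar:
  assumes "hom C g u x" and "hom C f x y" and "scalar C r"
  shows "comp C f (tarr C g r) = tarr C (comp C f g) r"
  using comp_tarr_ident[OF assms(1) _ assms(2), of r "unit C" "unit C"] assms hom_arr
  unfolding scalar_def by simp

lemma tarr_scalar_swap:
  assumes "arr C \<sigma>" and "hom C \<rho> u c" and "scalar C r"
  shows "tarr C (tarr C \<sigma> \<rho>) r = tarr C (tarr C \<sigma> r) \<rho>"
  using assms scalar_tarr_commute[OF assms(3,2)] tarr_assoc hom_arr unfolding scalar_def by metis

lemma disc_comp_discard_right: "comp C (disc C a) (discard_right a c) = disc C (tobj C a c)"
  using tarr_comp[OF hom_ident hom_disc hom_disc hom_ident, of a c] hom_arr[OF hom_disc]
    comp_ident_right[OF hom_disc] comp_ident_left[OF hom_disc]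
  by (simp add: disc_tobj)

lemma discard_right_tobj:
  "discard_right a (tobj C b c) = comp C (discard_right a b) (discard_right (tobj C a b) c)"
proof -
  have "discard_right a (tobj C b c) = tarr C (discard_right a b) (disc C c)"
    unfolding disc_tobj using tarr_assoc hom_arr hom_ident hom_disc by metis
  also have "\<dots> = comp C (tarr C (discard_right a b) (ident C (unit C))) (discard_right (tobj C a b) c)"
    using tarr_comp[OF hom_ident hom_discard_right hom_disc hom_ident]
      comp_ident_right[OF hom_discard_right] comp_ident_left[OF hom_disc] by simp
  finally show ?thesis using hom_arr[OF hom_discard_right] by simp
qed

lemma discard_right_tobj_ident:
  "discard_right (tobj C a b) c = tarr C (ident C a) (discard_right b c)"
  unfolding tarr_ident[of a b, symmetric] using tarr_assoc hom_arr hom_ident hom_disc by metis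

lemma state_tarr [intro]: "state C \<psi> a \<Longrightarrow> state C \<phi> b \<Longrightarrow> state C (tarr C \<psi> \<phi>) (tobj C a b)"
  unfolding state_def using hom_tarr by fastforce

lemma scalar_tarr [intro]: "scalar C r \<Longrightarrow> scalar C s \<Longrightarrow> scalar C (tarr C r s)"
  using state_tarr unfolding scalar_def state_def by fastforce

lemma causal_state_tarr:
  assumes "causal_state C \<sigma> a" and "causal_state C \<rho> c"
  shows "causal_state C (tarr C \<sigma> \<rho>) (tobj C a c)"
proof -
  have "comp C (disc C (tobj C a c)) (tarr C \<sigma> \<rho>) = tarr C (comp C (disc C a) \<sigma>) (comp C (disc C c) \<rho>)"
    using assms tarr_comp[of \<sigma> "unit C" a "disc C a" "unit C" \<rho> "unit C" c "disc C c" "unit C"]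
    unfolding causal_state_def state_def by (simp add: disc_tobj)
  also have "\<dots> = ident C (unit C)"
    using assms unfolding causal_state_def by (simp add: tarr_ident)
  finally show ?thesis
    using assms state_tarr unfolding causal_state_def by fastforce
qed

lemma causal_state_discard_right_iff:
  assumes "state C g (tobj C a c)"
  shows "causal_state C (comp C (discard_right a c) g) a \<longleftrightarrow> causal_state C g (tobj C a c)"
proof -
  have "comp C (disc C a) (comp C (discard_right a c) g) = comp C (disc C (tobj C a c)) g"
    using assms comp_assoc[OF _ hom_discard_right hom_disc] disc_comp_discard_right
    unfolding state_def by simp
  moreover have "state C (comp C (discard_right a c) g) a"
    using assms unfolding state_def by blast
  ultimately show ?thesis
    using assms unfolding causal_state_def by simp
qed

lemma causal_state_cancel_left:
  assumes "causal_state C \<sigma> a" and "hom C x u b" and "hom C y u b"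
    and "tarr C \<sigma> x = tarr C \<sigma> y"
  shows "x = y"
proof -
  have "comp C (tarr C (disc C a) (ident C b)) (tarr C \<sigma> z) = z" if "hom C z u b" for z
  proof -
    have "comp C (tarr C (disc C a) (ident C b)) (tarr C \<sigma> z) = tarr C (comp C (disc C a) \<sigma>) z"
      using comp_tarr_ident[OF _ that hom_disc] assms(1) unfolding causal_state_def state_def by blast
    then show ?thesis
      using assms(1) that hom_arr unfolding causal_state_def by simp
  qed
  then show ?thesis
    using assms(2-4) by metis
qed

lemma normalisation_exists:
  assumes "state C \<psi> a" and "\<psi> \<noteq> zero C (unit C) a"
  obtains \<sigma> r where "causal_state C \<sigma> a" and "scalar C r" and "\<psi> = tarr C \<sigma> r"
  using normalisation assms is_normalisation_iff[OF assms(1)]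
  unfolding satisfies_normalisation_def by metis

lemma causal_factor_unique:
  assumes "causal_state C \<sigma> a" and "causal_state C \<tau> a" and "scalar C r" and "scalar C s"
    and "tarr C \<sigma> r = tarr C \<tau> s" and "tarr C \<sigma> r \<noteq> zero C (unit C) a"
  shows "\<sigma> = \<tau>"
proof -
  have state: "state C (tarr C \<sigma> r) a"
    using state_tarr[OF causal_state_state[OF assms(1)], of r "unit C"] assms(3)
    unfolding scalar_def state_def by simp
  have "is_normalisation C (tarr C \<sigma> r) \<sigma>" and "is_normalisation C (tarr C \<sigma> r) \<tau>"
    using assms is_normalisation_iff[OF state] by auto
  moreover have "\<exists>!\<sigma>'. is_normalisation C (tarr C \<sigma> r) \<sigma>'"
    using normalisation state assms(6) unfolding satisfies_normalisation_def by blast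
  ultimately show ?thesis by blast
qed

lemma pure_zero: "pure C (zero C a b)"
  using hom_zero[of a b] unfolding pure_def hom_def by auto

lemma pure_stateI:
  assumes "state C \<psi> a"
    and "\<And>g c. \<psi> \<noteq> zero C (unit C) a \<Longrightarrow> state C g (tobj C a c) \<Longrightarrow>
           comp C (discard_right a c) g = \<psi> \<Longrightarrow> \<exists>\<rho>. causal_state C \<rho> c \<and> g = tarr C \<psi> \<rho>"
  shows "pure C \<psi>"
  using assms unfolding pure_def state_def hom_def by auto

lemma pure_stateD:
  assumes "pure C \<psi>" and "state C \<psi> a" and "\<psi> \<noteq> zero C (unit C) a"
    and "state C g (tobj C a c)" and "comp C (discard_right a c) g = \<psi>"
  obtains \<rho> where "causal_state C \<rho> c" and "g = tarr C \<psi> \<rho>"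
  using assms unfolding pure_def state_def hom_def by auto

lemma pure_causal_factor:
  assumes "state C \<psi> a" and "\<psi> \<noteq> zero C (unit C) a" and "pure C \<psi>"
    and causal: "causal_state C \<sigma> a" and "scalar C r" and \<psi>_eq: "\<psi> = tarr C \<sigma> r"
  shows "pure C \<sigma>"
proof (rule pure_stateI)
  show "state C \<sigma> a" using causal by (rule causal_state_state)
next
  fix g c
  assume g: "state C g (tobj C a c)" and marginal: "comp C (discard_right a c) g = \<sigma>"
  have gr: "state C (tarr C g r) (tobj C a c)"
    using state_tarr[OF g] \<open>scalar C r\<close> unfolding scalar_def state_def by fastforce
  have "comp C (discard_right a c) (tarr C g r) = \<psi>"
    using comp_tarr_scalar[OF _ hom_discard_right \<open>scalar C r\<close>] g marginal \<psi>_eq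
    unfolding state_def by blast
  then obtain \<rho> where \<rho>: "causal_state C \<rho> c" and gr_eq: "tarr C g r = tarr C \<psi> \<rho>"
    using pure_stateD[OF \<open>pure C \<psi>\<close> \<open>state C \<psi> a\<close> \<open>\<psi> \<noteq> _\<close> gr] by blast
  have "tarr C \<psi> \<rho> = tarr C (tarr C \<sigma> \<rho>) r"
    using tarr_scalar_swap \<psi>_eq causal causal_state_state \<rho> \<open>scalar C r\<close> hom_arr
    unfolding state_def by metis
  moreover have "causal_state C g (tobj C a c)"
    using causal_state_discard_right_iff[OF g] causal marginal by simp
  moreover have "tarr C g r \<noteq> zero C (unit C) (tobj C a c)"
    using \<open>comp C (discard_right a c) (tarr C g r) = \<psi>\<close> \<open>\<psi> \<noteq> _\<close> comp_zero_right[OF hom_discard_right]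
    by metis
  ultimately have "g = tarr C \<sigma> \<rho>"
    using causal_factor_unique causal_state_tarr[OF causal \<rho>] gr_eq \<open>scalar C r\<close> by metis
  then show "\<exists>\<rho>. causal_state C \<rho> c \<and> g = tarr C \<sigma> \<rho>"
    using \<rho> by blast
qed

lemma pure_tarr_scalar:
  assumes causal: "causal_state C \<sigma> a" and "pure C \<sigma>" and "scalar C r"
  shows "pure C (tarr C \<sigma> r)"
proof (rule pure_stateI)
  show \<psi>: "state C (tarr C \<sigma> r) a"
    using state_tarr[OF causal_state_state[OF causal], of r "unit C"] \<open>scalar C r\<close>
    unfolding scalar_def state_def by simp
  fix g c
  assume nonzero: "tarr C \<sigma> r \<noteq> zero C (unit C) a"
    and g: "state C g (tobj C a c)" and marginal: "comp C (discard_right a c) g = tarr C \<sigma> r"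
  have "g \<noteq> zero C (unit C) (tobj C a c)"
    using marginal nonzero comp_zero_right[OF hom_discard_right] by metis
  then obtain g' t where g': "causal_state C g' (tobj C a c)" and "scalar C t" and g_eq: "g = tarr C g' t"
    using normalisation_exists[OF g] by blast
  have g'_state: "state C g' (tobj C a c)"
    using g' by (rule causal_state_state)
  have "causal_state C (comp C (discard_right a c) g') a"
    using causal_state_discard_right_iff[OF g'_state] g' by simp
  moreover have scaled: "tarr C \<sigma> r = tarr C (comp C (discard_right a c) g') t"
    using marginal comp_tarr_scalar[OF _ hom_discard_right \<open>scalar C t\<close>] g'_state
    unfolding g_eq state_def by simp
  ultimately have marginal': "comp C (discard_right a c) g' = \<sigma>"
    using causal_factor_unique[OF causal _ \<open>scalar C r\<close> \<open>scalar C t\<close> _ nonzero] by simp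
  have "\<sigma> \<noteq> zero C (unit C) a"
    using nonzero tarr_zero_left[of r "unit C" "unit C" "unit C" a] \<open>scalar C r\<close>
    unfolding scalar_def by auto
  then obtain \<rho> where \<rho>: "causal_state C \<rho> c" and g'_eq: "g' = tarr C \<sigma> \<rho>"
    using pure_stateD[OF \<open>pure C \<sigma>\<close> causal_state_state[OF causal] _ g'_state marginal']
    by blast
  have "g = tarr C (tarr C \<sigma> t) \<rho>"
    unfolding g_eq g'_eq
    using tarr_scalar_swap[OF _ _ \<open>scalar C t\<close>] causal_state_state[OF \<rho>] causal hom_arr
    unfolding state_def causal_state_def by blast
  also have "\<dots> = tarr C (tarr C \<sigma> r) \<rho>"
    using scaled marginal' by simp
  finally show "\<exists>\<rho>. causal_state C \<rho> c \<and> g = tarr C (tarr C \<sigma> r) \<rho>"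
    using \<rho> by blast
qed

lemma pure_tarr_causal:
  assumes \<sigma>: "causal_state C \<sigma> a" and \<tau>: "causal_state C \<tau> b"
    and "pure C \<sigma>" and "pure C \<tau>"
  shows "pure C (tarr C \<sigma> \<tau>)"
proof (rule pure_stateI)
  have \<sigma>_state: "state C \<sigma> a" and \<tau>_state: "state C \<tau> b"
    using \<sigma> \<tau> by (auto intro: causal_state_state)
  then show "state C (tarr C \<sigma> \<tau>) (tobj C a b)" ..
  fix g c
  assume nonzero: "tarr C \<sigma> \<tau> \<noteq> zero C (unit C) (tobj C a b)"
    and g: "state C g (tobj C (tobj C a b) c)"
    and marginal: "comp C (discard_right (tobj C a b) c) g = tarr C \<sigma> \<tau>"
  have "\<sigma> \<noteq> zero C (unit C) a" and "\<tau> \<noteq> zero C (unit C) b"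
    using nonzero tarr_zero_left[of \<tau> "unit C" b "unit C" a] tarr_zero_right[of \<sigma> "unit C" a "unit C" b]
      \<sigma>_state \<tau>_state unfolding state_def by auto
  have "comp C (discard_right a (tobj C b c)) g
        = comp C (discard_right a b) (comp C (discard_right (tobj C a b) c) g)"
    using comp_assoc[OF _ hom_discard_right hom_discard_right] g
    unfolding discard_right_tobj state_def by simp
  also have "\<dots> = tarr C \<sigma> (comp C (disc C b) \<tau>)"
    using comp_ident_tarr[OF _ _ hom_disc] \<sigma>_state \<tau>_state unfolding marginal state_def by blast
  also have "\<dots> = \<sigma>"
    using \<tau> \<sigma>_state hom_arr unfolding causal_state_def state_def by simp
  finally obtain \<rho>' where \<rho>'_causal: "causal_state C \<rho>' (tobj C b c)" and g_eq: "g = tarr C \<sigma> \<rho>'"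
    using pure_stateD[OF \<open>pure C \<sigma>\<close> \<sigma>_state \<open>\<sigma> \<noteq> _\<close>] g by auto
  have \<rho>': "state C \<rho>' (tobj C b c)"
    using \<rho>'_causal by (rule causal_state_state)
  have "tarr C \<sigma> (comp C (discard_right b c) \<rho>') = tarr C \<sigma> \<tau>"
    using marginal comp_ident_tarr[OF _ _ hom_discard_right] \<sigma>_state \<rho>'
    unfolding g_eq discard_right_tobj_ident state_def by simp
  then have "comp C (discard_right b c) \<rho>' = \<tau>"
    using causal_state_cancel_left[OF \<sigma>] \<rho>' \<tau>_state unfolding state_def by blast
  then obtain \<rho> where \<rho>: "causal_state C \<rho> c" and "\<rho>' = tarr C \<tau> \<rho>"
    using pure_stateD[OF \<open>pure C \<tau>\<close> \<tau>_state \<open>\<tau> \<noteq> _\<close> \<rho>'] by blast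
  moreover have "arr C \<sigma>" "arr C \<tau>" "arr C \<rho>"
    using \<sigma>_state \<tau>_state causal_state_state[OF \<rho>] hom_arr unfolding state_def by blast+
  ultimately have "g = tarr C (tarr C \<sigma> \<tau>) \<rho>"
    using g_eq by (simp add: tarr_assoc)
  then show "\<exists>\<rho>. causal_state C \<rho> c \<and> g = tarr C (tarr C \<sigma> \<tau>) \<rho>"
    using \<rho> by blast
qed

lemma pure_tarr:
  assumes \<psi>: "state C \<psi> a" and \<phi>: "state C \<phi> b" and "pure C \<psi>" and "pure C \<phi>"
  shows "pure C (tarr C \<psi> \<phi>)"
proof (cases "tarr C \<psi> \<phi> = zero C (unit C) (tobj C a b)")
  case True
  then show ?thesis by (simp add: pure_zero)
next
  case False
  then have "\<psi> \<noteq> zero C (unit C) a" and "\<phi> \<noteq> zero C (unit C) b"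
    using tarr_zero_left[of \<phi> "unit C" b "unit C" a] tarr_zero_right[of \<psi> "unit C" a "unit C" b]
      \<psi> \<phi> unfolding state_def by auto
  then obtain \<psi>' r \<phi>' s where
      \<psi>': "causal_state C \<psi>' a" and r: "scalar C r" and \<psi>_eq: "\<psi> = tarr C \<psi>' r"
    and \<phi>': "causal_state C \<phi>' b" and s: "scalar C s" and \<phi>_eq: "\<phi> = tarr C \<phi>' s"
    using normalisation_exists \<psi> \<phi> by metis
  have "pure C \<psi>'" and "pure C \<phi>'"
    using pure_causal_factor \<psi> \<phi> \<open>\<psi> \<noteq> _\<close> \<open>\<phi> \<noteq> _\<close> \<open>pure C \<psi>\<close> \<open>pure C \<phi>\<close> \<psi>' \<phi>' r s \<psi>_eq \<phi>_eq
    by blast+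
  have arrs: "arr C \<psi>'" "arr C \<phi>'" "arr C r" "arr C s"
    using \<psi>' \<phi>' r s hom_arr unfolding causal_state_def state_def scalar_def by blast+
  have "tarr C \<psi> \<phi> = tarr C \<psi>' (tarr C (tarr C r \<phi>') s)"
    by (simp add: \<psi>_eq \<phi>_eq tarr_assoc arrs)
  also have "\<dots> = tarr C \<psi>' (tarr C (tarr C \<phi>' r) s)"
    using scalar_tarr_commute[OF r] \<phi>' unfolding causal_state_def state_def by metis
  also have "\<dots> = tarr C (tarr C \<psi>' \<phi>') (tarr C r s)"
    by (simp add: tarr_assoc arrs)
  finally show ?thesis
    using pure_tarr_scalar[OF causal_state_tarr[OF \<psi>' \<phi>'] pure_tarr_causal[OF \<psi>' \<phi>'] scalar_tarr[OF r s]]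
      \<open>pure C \<psi>'\<close> \<open>pure C \<phi>'\<close> by simp
qed

end

theorem mainTheorem5:
  fixes C :: "('o, 'm) smc"
  assumes "is_symmetric_monoidal C"
    and "has_discarding C"
    and "has_zeros C"
    and "satisfies_normalisation C"
  shows "(\<forall>\<psi> \<sigma> a. state C \<psi> a \<longrightarrow> \<psi> \<noteq> zero C (unit C) a \<longrightarrow> pure C \<psi> \<longrightarrow>
            is_normalisation C \<psi> \<sigma> \<longrightarrow> pure C \<sigma>)
       \<and> (\<forall>\<psi> \<phi> a b. state C \<psi> a \<longrightarrow> state C \<phi> b \<longrightarrow> pure C \<psi> \<longrightarrow> pure C \<phi> \<longrightarrow>
            pure C (tarr C \<psi> \<phi>))"
proof -
  interpret normalising_smc C
    using assms by unfold_locales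
  show ?thesis
    using pure_causal_factor pure_tarr is_normalisation_iff by metis
qed

end
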